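(* Let $k_1,k_2$ be integers with $1\le k_1$ and $1<k_2$. Then for lines $L_1,L_2$ the following are equivalent: (i) $L_1\perp L_2$; (ii) there are $X_1\in\mathcal H_{k_1}$, $X_2\in\mathcal H_{k_2}$ such that $X_1\perp_x X_2$ and $L_i\subset X_i$ for $i=1,2$.
   Context: Let $V$ be a vector space over a field with a nondegenerate symmetric bilinear form $\xi$ having no isotropic vectors. Points are elements of $V$; (affine) subspaces are sets $p+W$ with $W$ a linear subspace, of dimension $\dim W$; lines are the $1$-dimensional subspaces. $\mathcal H_k$ is the family of $k$-dimensional subspaces. For nonempty subspaces $X,Y$: $X\perp Y$ iff $\xi(b-a,d-c)=0$ for all $a,b\in X$, $c,d\in Y$ (for lines this is the usual orthogonality of directions); $X\perp_x Y$ iff $X\perp Y$ and $X\cap Y\neq\emptyset$. *)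

theory Defs
  imports Main "HOL.Vector_Spaces"
begin

definition sym_bilinear :: "('a::field \<Rightarrow> 'v::ab_group_add \<Rightarrow> 'v) \<Rightarrow> ('v \<Rightarrow> 'v \<Rightarrow> 'a) \<Rightarrow> bool" where
  "sym_bilinear scale xi \<longleftrightarrow>
     (\<forall>x y. xi x y = xi y x) \<and>
     (\<forall>x y z. xi (x + y) z = xi x z + xi y z) \<and>
     (\<forall>r x z. xi (scale r x) z = r * xi x z)"

definition nondegenerate :: "('v::zero \<Rightarrow> 'v \<Rightarrow> 'a::zero) \<Rightarrow> bool" where
  "nondegenerate xi \<longleftrightarrow> (\<forall>x. (\<forall>y. xi x y = 0) \<longrightarrow> x = 0)"

definition no_isotropic :: "('v::zero \<Rightarrow> 'v \<Rightarrow> 'a::zero) \<Rightarrow> bool" where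
  "no_isotropic xi \<longleftrightarrow> (\<forall>x. x \<noteq> 0 \<longrightarrow> xi x x \<noteq> 0)"

definition lin_dim :: "('a::field \<Rightarrow> 'v::ab_group_add \<Rightarrow> 'v) \<Rightarrow> 'v set \<Rightarrow> nat \<Rightarrow> bool" where
  "lin_dim scale W k \<longleftrightarrow>
     (\<exists>B. finite B \<and> card B = k \<and> \<not> module.dependent scale B \<and> W = module.span scale B)"

definition H :: "('a::field \<Rightarrow> 'v::ab_group_add \<Rightarrow> 'v) \<Rightarrow> nat \<Rightarrow> 'v set set" where
  "H scale k = {X. \<exists>p W. lin_dim scale W k \<and> X = (\<lambda>w. p + w) ` W}"

abbreviation lines :: "('a::field \<Rightarrow> 'v::ab_group_add \<Rightarrow> 'v) \<Rightarrow> 'v set set" where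
  "lines scale \<equiv> H scale 1"

definition perp :: "('v::ab_group_add \<Rightarrow> 'v \<Rightarrow> 'a::zero) \<Rightarrow> 'v set \<Rightarrow> 'v set \<Rightarrow> bool" where
  "perp xi X Y \<longleftrightarrow> X \<noteq> {} \<and> Y \<noteq> {} \<and>
     (\<forall>a\<in>X. \<forall>b\<in>X. \<forall>c\<in>Y. \<forall>d\<in>Y. xi (b - a) (d - c) = 0)"

definition perp_x :: "('v::ab_group_add \<Rightarrow> 'v \<Rightarrow> 'a::zero) \<Rightarrow> 'v set \<Rightarrow> 'v set \<Rightarrow> bool" where
  "perp_x xi X Y \<longleftrightarrow> perp xi X Y \<and> X \<inter> Y \<noteq> {}"

end

theory Submission
  imports Defs
begin

text \<open>Write \<open>L\<^sub>i = p\<^sub>i + span {u\<^sub>i}\<close>. Perpendicularity of the lines means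
  \<open>\<xi> u\<^sub>1 u\<^sub>2 = 0\<close>; then project \<open>p\<^sub>1 - p\<^sub>2\<close> onto \<open>u\<^sub>1, u\<^sub>2\<close> (possible since
  there are no isotropic vectors) to get a remainder \<open>w\<close> orthogonal to both, so that
  \<open>p\<^sub>1 - c\<^sub>1 u\<^sub>1 = p\<^sub>2 + c\<^sub>2 u\<^sub>2 + w\<close>. Extend the orthogonal family
  \<open>{u\<^sub>1, u\<^sub>2, w} - {0}\<close> by Gram-Schmidt to an orthogonal family of \<open>k\<^sub>1 + k\<^sub>2\<close>
  vectors and split it into \<open>k\<^sub>1\<close> vectors containing \<open>u\<^sub>1\<close> and \<open>k\<^sub>2 \<ge> 2\<close> vectors
  containing \<open>u\<^sub>2\<close> and \<open>w\<close>. The two translated spans are perpendicular and share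
  the point above.\<close>

lemma obtain_split_with_card:
  assumes "finite T" "S \<subseteq> T" "u \<in> S" "card T = k1 + k2" "1 \<le> k1" "card S \<le> k2 + 1"
  obtains T1 where "u \<in> T1" "T1 \<subseteq> T" "card T1 = k1" "T1 \<inter> S = {u}"
proof -
  have "card (T - S) = card T - card S"
    using assms(1,2) by (simp add: card_Diff_subset finite_subset)
  then have "k1 - 1 \<le> card (T - S)"
    using assms(4-6) by linarith
  then obtain A where A: "A \<subseteq> T - S" "card A = k1 - 1" "finite A"
    by (meson obtain_subset_with_card_n)
  have "u \<notin> A" using A(1) assms(3) by auto
  then show ?thesis
    using that[of "insert u A"] A assms(2,3,5) by auto
qed

locale sym_form_space = vector_space scale
  for scale :: "'a::field \<Rightarrow> 'v::ab_group_add \<Rightarrow> 'v" (infixr "*s" 75) +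
  fixes xi :: "'v \<Rightarrow> 'v \<Rightarrow> 'a"
  assumes sym_bilinear: "sym_bilinear scale xi"
    and no_isotropic: "no_isotropic xi"
begin

lemma xi_sym: "xi x y = xi y x"
  using sym_bilinear unfolding sym_bilinear_def by blast

lemma xi_add_left: "xi (x + y) z = xi x z + xi y z"
  using sym_bilinear unfolding sym_bilinear_def by blast

lemma xi_scale_left: "xi (r *s x) z = r * xi x z"
  using sym_bilinear unfolding sym_bilinear_def by blast

lemma xi_zero_left [simp]: "xi 0 z = 0"
  using xi_scale_left[of 0 0 z] by simp

lemma xi_diff_left: "xi (x - y) z = xi x z - xi y z"
  using xi_add_left[of x "- y" z] xi_scale_left[of "- 1" y z] by simp

lemma xi_sum_left: "xi (sum f S) z = (\<Sum>s\<in>S. xi (f s) z)"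
  by (induction S rule: infinite_finite_induct) (auto simp: xi_add_left)

lemma xi_self_nonzero: "x \<noteq> 0 \<Longrightarrow> xi x x \<noteq> 0"
  using no_isotropic unfolding no_isotropic_def by blast

lemma xi_span_left_eq_0:
  "x \<in> span A \<Longrightarrow> (\<And>a. a \<in> A \<Longrightarrow> xi a y = 0) \<Longrightarrow> xi x y = 0"
  by (induction x rule: span_induct_alt) (auto simp: xi_add_left xi_scale_left)

lemma xi_span_span_eq_0:
  assumes "x \<in> span A" "y \<in> span B" "\<And>a b. a \<in> A \<Longrightarrow> b \<in> B \<Longrightarrow> xi a b = 0"
  shows "xi x y = 0"
proof (rule xi_span_left_eq_0[OF assms(1)])
  fix a assume "a \<in> A"
  then have "xi y a = 0"
    using xi_span_left_eq_0[OF assms(2)] assms(3) xi_sym by metis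
  then show "xi a y = 0" by (simp add: xi_sym)
qed

definition orth_set :: "'v set \<Rightarrow> bool" where
  "orth_set S \<longleftrightarrow> 0 \<notin> S \<and> (\<forall>x\<in>S. \<forall>y\<in>S. x \<noteq> y \<longrightarrow> xi x y = 0)"

lemma orth_setD: "orth_set T \<Longrightarrow> a \<in> T \<Longrightarrow> b \<in> T \<Longrightarrow> a \<noteq> b \<Longrightarrow> xi a b = 0"
  unfolding orth_set_def by blast

lemma orth_set_subset: "orth_set T \<Longrightarrow> S \<subseteq> T \<Longrightarrow> orth_set S"
  unfolding orth_set_def by blast

lemma orth_set_independent: "orth_set S \<Longrightarrow> independent S"
proof
  assume S: "orth_set S" and "dependent S"
  then obtain a where a: "a \<in> S" "a \<in> span (S - {a})"
    by (auto simp: dependent_def)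
  have "xi a a = 0"
    by (rule xi_span_left_eq_0[OF a(2)]) (use S a(1) in \<open>auto simp: orth_set_def xi_sym\<close>)
  moreover have "a \<noteq> 0" using S a(1) by (auto simp: orth_set_def)
  ultimately show False using xi_self_nonzero by blast
qed

definition proj :: "'v set \<Rightarrow> 'v \<Rightarrow> 'v" where
  "proj S v = (\<Sum>s\<in>S. (xi v s / xi s s) *s s)"

lemma proj_in_span: "proj S v \<in> span S"
  unfolding proj_def by (intro span_sum span_scale span_base)

lemma xi_sub_proj_eq_0:
  assumes "finite S" "orth_set S" "t \<in> S"
  shows "xi (v - proj S v) t = 0"
proof -
  have "xi t t \<noteq> 0"
    using assms(2,3) xi_self_nonzero unfolding orth_set_def by metis
  then have "xi ((xi v s / xi s s) *s s) t = (if s = t then xi v t else 0)" if "s \<in> S" for s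
    using assms(2,3) that by (auto simp: xi_scale_left orth_set_def)
  then have "xi (proj S v) t = (\<Sum>s\<in>S. if s = t then xi v t else 0)"
    unfolding proj_def xi_sum_left by (rule sum.cong[OF refl])
  also have "\<dots> = xi v t" using assms(1,3) by simp
  finally show ?thesis by (simp add: xi_diff_left)
qed

lemma orth_set_extend:
  assumes "\<exists>B. finite B \<and> card B = n \<and> independent B"
  shows "finite S \<Longrightarrow> orth_set S \<Longrightarrow> card S \<le> n \<Longrightarrow>
    \<exists>T. S \<subseteq> T \<and> finite T \<and> orth_set T \<and> card T = n"
proof (induction "n - card S" arbitrary: S)
  case 0
  then show ?case by auto
next
  case (Suc m)
  obtain B where B: "finite B" "card B = n" "independent B" using assms by blast
  have "\<not> B \<subseteq> span S"
  proof
    assume "B \<subseteq> span S"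
    then have "card B \<le> card S" using independent_span_bound[OF Suc.prems(1) B(3)] by blast
    then show False using Suc.hyps(2) B(2) by linarith
  qed
  then obtain v where "v \<notin> span S" by blast
  define v' where "v' = v - proj S v"
  have "v' \<noteq> 0"
    using \<open>v \<notin> span S\<close> proj_in_span[of S v] unfolding v'_def by auto
  moreover have "xi v' t = 0" if "t \<in> S" for t
    unfolding v'_def using Suc.prems(1,2) that by (rule xi_sub_proj_eq_0)
  ultimately have "v' \<notin> S" "orth_set (insert v' S)"
    using Suc.prems(2) xi_self_nonzero by (auto simp: orth_set_def xi_sym)
  then have "\<exists>T. insert v' S \<subseteq> T \<and> finite T \<and> orth_set T \<and> card T = n"
    using Suc.hyps(2) Suc.prems(1) by (intro Suc.hyps(1)) auto
  then show ?case by blast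
qed

lemma translate_span_in_H:
  assumes "finite T" "independent T"
  shows "(\<lambda>x. p + x) ` span T \<in> H scale (card T)"
  using assms unfolding H_def lin_dim_def by blast

lemma perp_translate_spans:
  assumes "orth_set T" "T1 \<subseteq> T"
  shows "perp xi ((\<lambda>x. p + x) ` span T1) ((\<lambda>x. q + x) ` span (T - T1))"
  unfolding perp_def
proof (intro conjI ballI)
  fix x1 x2 y1 y2
  assume "x1 \<in> (\<lambda>x. p + x) ` span T1" "x2 \<in> (\<lambda>x. p + x) ` span T1"
    "y1 \<in> (\<lambda>x. q + x) ` span (T - T1)" "y2 \<in> (\<lambda>x. q + x) ` span (T - T1)"
  then have "x2 - x1 \<in> span T1" "y2 - y1 \<in> span (T - T1)"
    using span_diff by force+
  then show "xi (x2 - x1) (y2 - y1) = 0"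
  proof (rule xi_span_span_eq_0)
    show "xi a b = 0" if "a \<in> T1" "b \<in> T - T1" for a b
      using that assms orth_setD by blast
  qed
qed (use span_zero in auto)

lemma line_obtain:
  assumes "L \<in> lines scale"
  obtains p u where "u \<noteq> 0" "L = (\<lambda>x. p + x) ` span {u}"
proof -
  obtain p W where W: "lin_dim scale W 1" "L = (\<lambda>x. p + x) ` W"
    using assms by (auto simp: H_def)
  then obtain B where B: "card B = 1" "independent B" "W = span B"
    by (auto simp: lin_dim_def)
  then obtain u where "B = {u}" by (auto simp: card_Suc_eq)
  then show ?thesis using that B W(2) by auto
qed

lemma perp_lines_directions:
  assumes "perp xi ((\<lambda>x. a + x) ` span {u1}) ((\<lambda>x. b + x) ` span {u2})"
  shows "xi u1 u2 = 0"
proof -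
  have "a \<in> (\<lambda>x. a + x) ` span {u1}" "a + u1 \<in> (\<lambda>x. a + x) ` span {u1}"
    "b \<in> (\<lambda>x. b + x) ` span {u2}" "b + u2 \<in> (\<lambda>x. b + x) ` span {u2}"
    by (auto intro: span_zero span_base)
  then have "xi ((a + u1) - a) ((b + u2) - b) = 0"
    using assms unfolding perp_def by blast
  then show ?thesis by simp
qed

lemma orth_pair_decomp:
  assumes "u1 \<noteq> 0" "u2 \<noteq> 0" "xi u1 u2 = 0"
  obtains c1 c2 w where "d = c1 *s u1 + c2 *s u2 + w" "xi w u1 = 0" "xi w u2 = 0"
proof
  have "u1 \<noteq> u2" using assms xi_self_nonzero by blast
  then have S: "orth_set {u1, u2}"
    using assms by (auto simp: orth_set_def xi_sym)
  define w where "w = d - proj {u1, u2} d"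
  show "d = (xi d u1 / xi u1 u1) *s u1 + (xi d u2 / xi u2 u2) *s u2 + w"
    using \<open>u1 \<noteq> u2\<close> unfolding w_def proj_def by simp
  show "xi w u1 = 0" "xi w u2 = 0"
    unfolding w_def using xi_sub_proj_eq_0[OF _ S] by auto
qed

lemma orthogonal_lines_in_perp_x_subspaces:
  assumes B: "\<exists>B. finite B \<and> card B = k1 + k2 \<and> independent B"
    and k: "1 \<le> k1" "1 < k2"
    and u: "u1 \<noteq> 0" "u2 \<noteq> 0" "xi u1 u2 = 0"
  shows "\<exists>X1 \<in> H scale k1. \<exists>X2 \<in> H scale k2. perp_x xi X1 X2 \<and>
           (\<lambda>x. a + x) ` span {u1} \<subseteq> X1 \<and> (\<lambda>x. b + x) ` span {u2} \<subseteq> X2"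
proof -
  have u12: "u1 \<noteq> u2" using u xi_self_nonzero by blast
  obtain c1 c2 w where d: "a - b = c1 *s u1 + c2 *s u2 + w" and "xi w u1 = 0" "xi w u2 = 0"
    using orth_pair_decomp[OF u] .
  then have w: "w \<noteq> u1" and S: "orth_set ({u1, u2, w} - {0})"
    using u xi_self_nonzero by (auto simp: orth_set_def xi_sym)
  have meet: "a + - (c1 *s u1) = b + (c2 *s u2 + w)"
    using d by (simp add: algebra_simps)
  have card_S: "card ({u1, u2, w} - {0}) \<le> 3"
    by (rule order_trans[OF card_Diff1_le]) (auto simp: card_insert_if)
  have "finite ({u1, u2, w} - {0})" by simp
  moreover have "card ({u1, u2, w} - {0}) \<le> k1 + k2" using card_S k by linarith
  ultimately obtain T where T: "{u1, u2, w} - {0} \<subseteq> T" "finite T" "orth_set T" "card T = k1 + k2"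
    using orth_set_extend[OF B _ S] by blast
  obtain T1 where T1: "u1 \<in> T1" "T1 \<subseteq> T" "card T1 = k1" "T1 \<inter> ({u1, u2, w} - {0}) = {u1}"
    by (rule obtain_split_with_card[where u = u1, OF T(2,1) _ T(4) k(1)]) (use u card_S k in auto)
  define X1 where "X1 = (\<lambda>x. a + x) ` span T1"
  define X2 where "X2 = (\<lambda>x. b + x) ` span (T - T1)"
  have T2: "{u1, u2, w} - {0, u1} \<subseteq> T - T1" using T(1) T1(4) by blast
  then have u2_T2: "u2 \<in> T - T1" using u u12 by blast
  have w_T2: "w \<in> span (T - T1)"
  proof (cases "w = 0")
    case False
    then show ?thesis using T2 w(1) by (intro span_base) blast
  qed (simp add: span_zero)
  have indep: "independent T1" "independent (T - T1)"
    using orth_set_independent[OF orth_set_subset[OF T(3)]] T1(2) by auto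
  have "card (T - T1) = k2"
    using T(2,4) T1(2,3) by (simp add: card_Diff_subset finite_subset)
  then have "X1 \<in> H scale k1" "X2 \<in> H scale k2"
    unfolding X1_def X2_def T1(3)[symmetric]
    using T(2) T1(2) indep by (auto intro!: translate_span_in_H intro: finite_subset)
  moreover have "X1 \<inter> X2 \<noteq> {}"
  proof -
    have "a + - (c1 *s u1) \<in> X1"
      unfolding X1_def using T1(1) by (intro imageI span_neg span_scale span_base)
    moreover have "b + (c2 *s u2 + w) \<in> X2"
      unfolding X2_def by (intro imageI span_add[OF span_scale[OF span_base[OF u2_T2]] w_T2])
    ultimately show ?thesis using meet by auto
  qed
  moreover have "perp xi X1 X2"
    unfolding X1_def X2_def using perp_translate_spans T(3) T1(2) .
  moreover have "(\<lambda>x. a + x) ` span {u1} \<subseteq> X1" "(\<lambda>x. b + x) ` span {u2} \<subseteq> X2"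
    unfolding X1_def X2_def using T1(1) u2_T2 by (auto intro!: image_mono span_mono)
  ultimately show ?thesis unfolding perp_x_def by blast
qed

end

lemma perp_mono:
  "perp xi X Y \<Longrightarrow> L \<subseteq> X \<Longrightarrow> M \<subseteq> Y \<Longrightarrow> L \<noteq> {} \<Longrightarrow> M \<noteq> {} \<Longrightarrow> perp xi L M"
  unfolding perp_def by blast

theorem lemma2p3:
  fixes scale :: "'a::field \<Rightarrow> 'v::ab_group_add \<Rightarrow> 'v"
    and xi :: "'v \<Rightarrow> 'v \<Rightarrow> 'a"
    and k1 k2 :: nat
    and L1 L2 :: "'v set"
  assumes "vector_space scale"
    and "sym_bilinear scale xi"
    and "nondegenerate xi"
    and "no_isotropic xi"
    and "\<exists>B. finite B \<and> card B = k1 + k2 \<and> \<not> module.dependent scale B"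
    and "1 \<le> k1" and "1 < k2"
    and "L1 \<in> lines scale" and "L2 \<in> lines scale"
  shows "perp xi L1 L2 \<longleftrightarrow>
         (\<exists>X1 \<in> H scale k1. \<exists>X2 \<in> H scale k2. perp_x xi X1 X2 \<and> L1 \<subseteq> X1 \<and> L2 \<subseteq> X2)"
proof -
  interpret sym_form_space scale xi
    using assms(1,2,4) by (simp add: sym_form_space_def sym_form_space_axioms_def)
  obtain a u1 where L1: "u1 \<noteq> 0" "L1 = (\<lambda>x. a + x) ` span {u1}"
    using line_obtain[OF assms(8)] .
  obtain b u2 where L2: "u2 \<noteq> 0" "L2 = (\<lambda>x. b + x) ` span {u2}"
    using line_obtain[OF assms(9)] .
  show ?thesis
  proof
    assume "perp xi L1 L2"
    then have "xi u1 u2 = 0"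
      unfolding L1(2) L2(2) by (rule perp_lines_directions)
    then show "\<exists>X1 \<in> H scale k1. \<exists>X2 \<in> H scale k2. perp_x xi X1 X2 \<and> L1 \<subseteq> X1 \<and> L2 \<subseteq> X2"
      unfolding L1(2) L2(2) by (rule orthogonal_lines_in_perp_x_subspaces[OF assms(5-7) L1(1) L2(1)])
  next
    have "L1 \<noteq> {}" "L2 \<noteq> {}" using L1(2) L2(2) span_zero by auto
    then show "perp xi L1 L2"
      if "\<exists>X1 \<in> H scale k1. \<exists>X2 \<in> H scale k2. perp_x xi X1 X2 \<and> L1 \<subseteq> X1 \<and> L2 \<subseteq> X2"
      using that perp_mono unfolding perp_x_def by blast
  qed
qed

end
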